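(* (Discrete maximum principle.) For every $R>0$, every discretization $\Delta$ and every $[f]_\Delta\in\mathcal F^R_\Delta$, the discrete state vector $(v_\gamma(k))$ of $[f]_\Delta$ satisfies $$\max_{0\le k\le n}\max_{\gamma\in\mathcal A(\Omega_\Delta)}|v_\gamma(k)|\le e^T\max\Big\{\frac1{\bar b}\|[f]_\Delta\|_{\ell_\infty},\ \|\Phi\|_{L_\infty(\Omega)}\Big\}.$$
   Context: Setting: $d\ge1$, $\Omega\subset\mathbb R^d$ bounded open with Lipschitz boundary, $T>0$. $b:\mathbb R\to\mathbb R$ is increasing, piecewise $C^1$ with finitely many upward jumps, and $\bar b:=\inf\{b'(v):v\text{ not a jump point}\}>0$. $\Phi\in W_2^1(\Omega+B_1(0))$ with $\Phi|_\Omega\in L_\infty(\Omega)$. For $n\in\mathbb N$, $\tau=T/n$, $t_k=k\tau$, $h>0$, $\Delta=(\tau,h)$. For $\gamma\in\mathbb Z^d$: $x_\gamma=h\gamma$, $R^\gamma=\prod_i[\gamma_ih,(\gamma_i+1)h]$. $\mathcal A=\{\gamma:R^\gamma\subset\overline\Omega\}$, $\Omega_\Delta=\bigcup_{\gamma\in\mathcal A}R^\gamma$; $\mathcal A(\Omega_\Delta)$, $\mathcal A(\Omega'_\Delta)$, $\mathcal A(\partial\Omega_\Delta)$ are the $\gamma$ with $x_\gamma$ in $\Omega_\Delta$, its interior, its boundary. $e_i$ is the $i$-th unit multi-index; $w_{\gamma x_i}=(w_{\gamma+e_i}-w_\gamma)/h$; $(w(k))_{\bar t}=(w(k)-w(k-1))/\tau$.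 $\Phi_\gamma=h^{-d}\int_{R^\gamma}\Phi$. Mollifier $\omega_\rho(v)=\mathcal C\rho^{-1}e^{-\rho^2/(\rho^2-v^2)}$ for $|v|\le\rho$, $0$ otherwise (unit integral); $b_n=b*\omega_{1/n}$. Discrete controls $[f]_\Delta=(f_{(\gamma,k)})_{\gamma\in\mathcal A,1\le k\le n}$, $\|[f]_\Delta\|_{\ell_\infty}=\max|f_{(\gamma,k)}|$, $\mathcal F^R_\Delta=\{\|[f]_\Delta\|_{\ell_\infty}\le R\}$. Discrete state vector of $[f]_\Delta$: $(v_\gamma(k))_{\gamma\in\mathcal A(\Omega_\Delta),0\le k\le n}$ with (i) $v_\gamma(0)=\Phi_\gamma$ for $\gamma\in\mathcal A(\Omega'_\Delta)$; (ii) for each $k=1,\dots,n$, $\sum_{\gamma\in\mathcal A}h^d[(b_n(v_\gamma(k)))_{\bar t}\eta_\gamma+\sum_{i=1}^dv_{\gamma x_i}(k)\eta_{\gamma x_i}-f_{(\gamma,k)}\eta_\gamma]=0$ for every $(\eta_\gamma)_{\gamma\in\mathcal A(\Omega_\Delta)}$ vanishing on $\mathcal A(\partial\Omega_\Delta)$; (iii) $v_\gamma(k)=0$ for $\gamma\in\mathcal A(\partial\Omega_\Delta)$, all $k$. It exists and is unique. *)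

theory Defs
  imports "HOL-Analysis.Analysis" "HOL-Probability.Essential_Supremum"
begin

(* Near every boundary point, after a rotation, \<Omega> is the region below the graph of a
   Lipschitz function: e is the (unit) "vertical" direction, g is evaluated on the
   hyperplane orthogonal to e. *)
definition lipschitz_boundary :: "(real^'d) set \<Rightarrow> bool" where
  "lipschitz_boundary \<Omega> \<longleftrightarrow>
     (\<forall>x\<in>frontier \<Omega>. \<exists>r>0. \<exists>e::real^'d. \<exists>g::real^'d \<Rightarrow> real. \<exists>L.
        norm e = 1 \<and> (\<forall>y z. \<bar>g y - g z\<bar> \<le> L * norm (y - z)) \<and>
        \<Omega> \<inter> ball x r = {y \<in> ball x r. y \<bullet> e < g (y - (y \<bullet> e) *\<^sub>R e)})"

definition partial_deriv :: "'d \<Rightarrow> (real^'d \<Rightarrow> real) \<Rightarrow> real^'d \<Rightarrow> real" where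
  "partial_deriv i \<phi> x = deriv (\<lambda>t. \<phi> (x + t *\<^sub>R axis i 1)) 0"

fun iter_partial :: "'d list \<Rightarrow> (real^'d \<Rightarrow> real) \<Rightarrow> real^'d \<Rightarrow> real" where
  "iter_partial [] \<phi> = \<phi>"
| "iter_partial (i # is) \<phi> = partial_deriv i (iter_partial is \<phi>)"

definition smooth_fun :: "(real^'d \<Rightarrow> real) \<Rightarrow> bool" where
  "smooth_fun \<phi> \<longleftrightarrow>
     (\<forall>is. continuous_on UNIV (iter_partial is \<phi>) \<and>
        (\<forall>i x. (\<lambda>t. iter_partial is \<phi> (x + t *\<^sub>R axis i 1)) differentiable (at 0)))"

definition test_fun :: "(real^'d) set \<Rightarrow> (real^'d \<Rightarrow> real) \<Rightarrow> bool" where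
  "test_fun U \<phi> \<longleftrightarrow> smooth_fun \<phi> \<and> compact (closure {x. \<phi> x \<noteq> 0})
                      \<and> closure {x. \<phi> x \<noteq> 0} \<subseteq> U"

definition L2_on :: "(real^'d) set \<Rightarrow> (real^'d \<Rightarrow> real) \<Rightarrow> bool" where
  "L2_on U u \<longleftrightarrow> set_borel_measurable lebesgue U u \<and> set_integrable lebesgue U (\<lambda>x. (u x)\<^sup>2)"

definition W12 :: "(real^'d) set \<Rightarrow> (real^'d \<Rightarrow> real) set" where
  "W12 U = {u. L2_on U u \<and>
     (\<forall>i. \<exists>g. L2_on U g \<and>
        (\<forall>\<phi>. test_fun U \<phi> \<longrightarrow>
           (LINT x:U|lebesgue. u x * partial_deriv i \<phi> x) = - (LINT x:U|lebesgue. g x * \<phi> x)))}"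

definition nbhd1 :: "(real^'d) set \<Rightarrow> (real^'d) set" where
  "nbhd1 \<Omega> = {x + y | x y. x \<in> \<Omega> \<and> y \<in> ball 0 1}"

definition Linf_norm :: "(real^'d) set \<Rightarrow> (real^'d \<Rightarrow> real) \<Rightarrow> ereal" where
  "Linf_norm \<Omega> u = esssup (restrict_space lebesgue \<Omega>) (\<lambda>x. ereal \<bar>u x\<bar>)"

definition jump_points :: "(real \<Rightarrow> real) \<Rightarrow> real set" where
  "jump_points b = {v. \<not> isCont b v}"

definition admissible_b :: "(real \<Rightarrow> real) \<Rightarrow> bool" where
  "admissible_b b \<longleftrightarrow> mono b \<and> finite (jump_points b) \<and>
     (\<forall>j\<in>jump_points b. \<exists>l r. (b \<longlongrightarrow> l) (at_left j) \<and> (b \<longlongrightarrow> r) (at_right j) \<and> l < r) \<and>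
     (\<forall>v. v \<notin> jump_points b \<longrightarrow> b differentiable (at v)) \<and>
     continuous_on (- jump_points b) (deriv b)"

definition b_bar :: "(real \<Rightarrow> real) \<Rightarrow> real" where
  "b_bar b = Inf (deriv b ` (- jump_points b))"

(* mollifier \<omega>_\<rho> with unit integral *)
definition moll_const :: real where
  "moll_const = 1 / (LBINT s=-1..1. exp (- 1 / (1 - s\<^sup>2)))"

definition mollifier :: "real \<Rightarrow> real \<Rightarrow> real" where
  "mollifier \<rho> v = (if \<bar>v\<bar> < \<rho> then moll_const / \<rho> * exp (- \<rho>\<^sup>2 / (\<rho>\<^sup>2 - v\<^sup>2)) else 0)"

definition b_moll :: "(real \<Rightarrow> real) \<Rightarrow> nat \<Rightarrow> real \<Rightarrow> real" where
  "b_moll b n v = (LINT u|lborel. b (v - u) * mollifier (1 / real n) u)"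

definition grid_pt :: "real \<Rightarrow> int^'d \<Rightarrow> real^'d" where
  "grid_pt h \<gamma> = (\<chi> i. h * of_int (\<gamma> $ i))"

definition cell :: "real \<Rightarrow> int^'d \<Rightarrow> (real^'d) set" where
  "cell h \<gamma> = cbox (grid_pt h \<gamma>) (\<chi> i. h * (of_int (\<gamma> $ i) + 1))"

definition cell_idx :: "(real^'d) set \<Rightarrow> real \<Rightarrow> (int^'d) set" where
  "cell_idx \<Omega> h = {\<gamma>. cell h \<gamma> \<subseteq> closure \<Omega>}"

definition grid_dom :: "(real^'d) set \<Rightarrow> real \<Rightarrow> (real^'d) set" where
  "grid_dom \<Omega> h = (\<Union>\<gamma>\<in>cell_idx \<Omega> h. cell h \<gamma>)"

definition nodes :: "(real^'d) set \<Rightarrow> real \<Rightarrow> (int^'d) set" where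
  "nodes \<Omega> h = {\<gamma>. grid_pt h \<gamma> \<in> grid_dom \<Omega> h}"

definition int_nodes :: "(real^'d) set \<Rightarrow> real \<Rightarrow> (int^'d) set" where
  "int_nodes \<Omega> h = {\<gamma>. grid_pt h \<gamma> \<in> interior (grid_dom \<Omega> h)}"

definition bd_nodes :: "(real^'d) set \<Rightarrow> real \<Rightarrow> (int^'d) set" where
  "bd_nodes \<Omega> h = {\<gamma>. grid_pt h \<gamma> \<in> frontier (grid_dom \<Omega> h)}"

definition fdiff :: "real \<Rightarrow> (int^'d \<Rightarrow> real) \<Rightarrow> int^'d \<Rightarrow> 'd \<Rightarrow> real" where
  "fdiff h w \<gamma> i = (w (\<gamma> + axis i 1) - w \<gamma>) / h"

definition cell_avg :: "real \<Rightarrow> (real^'d \<Rightarrow> real) \<Rightarrow> int^'d \<Rightarrow> real" where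
  "cell_avg h \<Phi> \<gamma> = (LINT x:cell h \<gamma>|lebesgue. \<Phi> x) / h ^ CARD('d)"

definition disc_linf :: "(real^'d) set \<Rightarrow> real \<Rightarrow> nat \<Rightarrow> (int^'d \<Rightarrow> nat \<Rightarrow> real) \<Rightarrow> real" where
  "disc_linf \<Omega> h n f = Max {\<bar>f \<gamma> k\<bar> | \<gamma> k. \<gamma> \<in> cell_idx \<Omega> h \<and> k \<in> {1..n}}"

(* discrete state vector (v_\<gamma>(k)) of [f]_\<Delta>, \<Delta> = (T/n, h) *)
definition disc_state ::
  "(real^'d) set \<Rightarrow> real \<Rightarrow> nat \<Rightarrow> real \<Rightarrow> (real \<Rightarrow> real) \<Rightarrow> (real^'d \<Rightarrow> real)
     \<Rightarrow> (int^'d \<Rightarrow> nat \<Rightarrow> real) \<Rightarrow> (int^'d \<Rightarrow> nat \<Rightarrow> real) \<Rightarrow> bool" where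
  "disc_state \<Omega> T n h b \<Phi> f v \<longleftrightarrow>
     (\<forall>\<gamma>\<in>int_nodes \<Omega> h. v \<gamma> 0 = cell_avg h \<Phi> \<gamma>) \<and>
     (\<forall>k\<in>{1..n}. \<forall>\<eta>::int^'d \<Rightarrow> real. (\<forall>\<gamma>\<in>bd_nodes \<Omega> h. \<eta> \<gamma> = 0) \<longrightarrow>
        (\<Sum>\<gamma>\<in>cell_idx \<Omega> h. h ^ CARD('d) *
            ((b_moll b n (v \<gamma> k) - b_moll b n (v \<gamma> (k - 1))) / (T / real n) * \<eta> \<gamma>
             + (\<Sum>i\<in>UNIV. fdiff h (\<lambda>\<mu>. v \<mu> k) \<gamma> i * fdiff h \<eta> \<gamma> i)
             - f \<gamma> k * \<eta> \<gamma>)) = 0) \<and>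
     (\<forall>\<gamma>\<in>bd_nodes \<Omega> h. \<forall>k\<le>n. v \<gamma> k = 0)"

end

theory Submission
  imports Defs
begin

text \<open>
  Testing the scheme at step \<open>k\<close> with the indicator of a node where \<open>v(k)\<close> is maximal makes
  the discrete Dirichlet form nonnegative, so \<open>b\<^sub>n(v(k)) - b\<^sub>n(v(k-1)) \<le> \<tau> f\<close> there. The
  smoothed nonlinearity inherits from \<open>b\<close> the growth \<open>b\<^sub>n(x) - b\<^sub>n(y) \<ge> b_bar b (x - y)\<close> for
  \<open>y \<le> x\<close>, obtained by integrating \<open>b' \<ge> b_bar b\<close> between the finitely many upward jumps; hence
  the maximum grows by at most \<open>\<tau> \<parallel>f\<parallel>/b_bar b\<close> per step, and dually for the minimum. Boundary
  nodes carry zero and the initial values are cell averages of \<open>\<Phi>\<close>, so after \<open>n\<close> steps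
  \<open>|v| \<le> \<parallel>\<Phi>\<parallel>\<^sub>\<infinity> + T \<parallel>f\<parallel>/b_bar b \<le> (1 + T) max{\<dots>} \<le> e\<^sup>T max{\<dots>}\<close>.
\<close>

lemma growth_on_jump_free_interval:
  fixes B :: "real \<Rightarrow> real"
  assumes "mono B" "c > 0" "y < x"
    and smooth: "\<And>v. y < v \<Longrightarrow> v < x \<Longrightarrow> isCont B v \<and> (\<exists>d\<ge>c. (B has_real_derivative d) (at v))"
  shows "c * (x - y) \<le> B x - B y"
proof -
  have inner: "c * (t - s) \<le> B t - B s" if "y < s" "s \<le> t" "t < x" for s t
  proof -
    have "continuous_on {s..t} B"
      using smooth that by (intro continuous_at_imp_continuous_on) auto
    then have "continuous_on {s..t} (\<lambda>z. B z - c * z)"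
      by (intro continuous_intros)
    moreover have "\<exists>d. ((\<lambda>z. B z - c * z) has_real_derivative d) (at z) \<and> 0 \<le> d"
      if "s < z" "z < t" for z
    proof -
      have "y < z" "z < x" using that \<open>y < s\<close> \<open>t < x\<close> by auto
      then obtain d where "d \<ge> c" "(B has_real_derivative d) (at z)"
        using smooth by blast
      then show ?thesis by (auto intro!: derivative_eq_intros)
    qed
    ultimately have "B s - c * s \<le> B t - c * t"
      using DERIV_nonneg_imp_increasing_open[OF \<open>s \<le> t\<close>] by blast
    then show ?thesis by (simp add: algebra_simps)
  qed
  \<comment> \<open>\<open>B\<close> may jump at \<open>y\<close> or \<open>x\<close>: shrink the interval and let monotonicity handle the ends\<close>
  show ?thesis
  proof (rule field_le_epsilon)
    fix e :: real assume "e > 0"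
    define d where "d = min ((x - y) / 3) (e / (2 * c))"
    have d: "0 < d" "y + d \<le> x - d" "2 * c * d \<le> e"
      using \<open>y < x\<close> \<open>e > 0\<close> \<open>c > 0\<close> by (auto simp: d_def field_simps min_def)
    have "c * (x - y) = c * ((x - d) - (y + d)) + 2 * c * d" by (simp add: algebra_simps)
    also have "\<dots> \<le> (B (x - d) - B (y + d)) + e"
      using inner[of "y + d" "x - d"] d by auto
    also have "\<dots> \<le> B x - B y + e"
      using monoD[OF \<open>mono B\<close>, of "y" "y + d"] monoD[OF \<open>mono B\<close>, of "x - d" x] d by auto
    finally show "c * (x - y) \<le> B x - B y + e" .
  qed
qed

lemma mono_growth_of_deriv_ge:
  fixes B :: "real \<Rightarrow> real"
  assumes mono: "mono B" and "finite J"
    and cont: "\<And>v. v \<notin> J \<Longrightarrow> isCont B v"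
    and deriv: "\<And>v. v \<notin> J \<Longrightarrow> \<exists>d\<ge>c. (B has_real_derivative d) (at v)"
    and "y \<le> x"
  shows "c * (x - y) \<le> B x - B y"
proof (cases "c > 0")
  case False
  then have "c * (x - y) \<le> 0" using \<open>y \<le> x\<close> by (intro mult_nonpos_nonneg) auto
  then show ?thesis using monoD[OF mono \<open>y \<le> x\<close>] by simp
next
  case True
  have "\<forall>y x. card (J \<inter> {y<..<x}) = m \<longrightarrow> y \<le> x \<longrightarrow> c * (x - y) \<le> B x - B y" for m
  proof (induction m rule: less_induct)
    case (less m)
    show ?case
    proof (intro allI impI)
      fix y x assume m: "card (J \<inter> {y<..<x}) = m" and "y \<le> x"
      show "c * (x - y) \<le> B x - B y"
      proof (cases "J \<inter> {y<..<x} = {}")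
        case True
        then have "v \<notin> J" if "y < v" "v < x" for v using that by auto
        then show ?thesis
          using growth_on_jump_free_interval[OF mono \<open>c > 0\<close>, of y x] cont deriv \<open>y \<le> x\<close>
          by (cases "y = x") auto
      next
        case False
        then obtain j where j: "j \<in> J" "y < j" "j < x" by auto
        have "finite (J \<inter> {y<..<x})" using \<open>finite J\<close> by simp
        then have "card (J \<inter> {y<..<j}) < m" "card (J \<inter> {j<..<x}) < m"
          unfolding m[symmetric] using j by (auto intro!: psubset_card_mono)
        then have "c * (j - y) \<le> B j - B y" "c * (x - j) \<le> B x - B j"
          using less.IH j by auto
        then show ?thesis by (simp add: algebra_simps)
      qed
    qed
  qed
  then show ?thesis using \<open>y \<le> x\<close> by blast
qed

lemma b_bar_le_deriv:
  assumes "admissible_b b" "v \<notin> jump_points b"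
  shows "b_bar b \<le> deriv b v"
proof -
  have "0 \<le> deriv b w" if "w \<notin> jump_points b" for w
  proof (rule mono_on_imp_deriv_nonneg)
    show "mono_on UNIV b" using assms(1) by (simp add: admissible_b_def)
    show "(b has_real_derivative deriv b w) (at w)"
      using assms(1) that by (simp add: admissible_b_def DERIV_deriv_iff_real_differentiable)
  qed simp
  then have "bdd_below (deriv b ` (- jump_points b))" by (intro bdd_belowI[of _ 0]) auto
  then show ?thesis unfolding b_bar_def using assms(2) by (intro cInf_lower) auto
qed

lemma admissible_b_growth:
  assumes "admissible_b b" "y \<le> x"
  shows "b_bar b * (x - y) \<le> b x - b y"
proof (rule mono_growth_of_deriv_ge[where J = "jump_points b"])
  fix v assume v: "v \<notin> jump_points b"
  then show "isCont b v" by (simp add: jump_points_def)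
  have "(b has_real_derivative deriv b v) (at v)"
    using assms(1) v by (simp add: admissible_b_def DERIV_deriv_iff_real_differentiable)
  then show "\<exists>d\<ge>b_bar b. (b has_real_derivative d) (at v)"
    using b_bar_le_deriv[OF assms(1) v] by blast
qed (use assms in \<open>auto simp: admissible_b_def\<close>)

definition bump :: "real \<Rightarrow> real" where
  "bump s = indicator {-1<..<1} s * exp (- 1 / (1 - s\<^sup>2))"

lemma bump_measurable [measurable]: "bump \<in> borel_measurable borel"
  unfolding bump_def by measurable

lemma bump_nonneg: "0 \<le> bump s"
  unfolding bump_def by (auto simp: indicator_def)

lemma bump_le_indicator: "bump s \<le> indicator {-1..1} s"
proof (cases "s \<in> {-1<..<1}")
  case True
  then have "s\<^sup>2 < 1" by (simp add: abs_square_less_1 abs_less_iff)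
  then have "exp (- 1 / (1 - s\<^sup>2)) \<le> 1" by (simp add: divide_nonpos_pos)
  then show ?thesis using True by (simp add: bump_def)
qed (auto simp: bump_def indicator_def)

lemma integrable_bump: "integrable lborel bump"
  by (rule Bochner_Integration.integrable_bound[of _ "indicator {-1..1::real}"])
     (use bump_le_indicator bump_nonneg in \<open>auto intro!: integrable_real_indicator AE_I2\<close>)

lemma integral_bump_pos: "integral\<^sup>L lborel bump > 0"
proof -
  have "exp (-4/3) * indicator {-1/2..1/2} s \<le> bump s" for s :: real
  proof (cases "s \<in> {-1/2..1/2}")
    case True
    then have "s\<^sup>2 \<le> (1/2)\<^sup>2" using abs_le_square_iff[of s "1/2"] by auto
    then have "1 / (1 - s\<^sup>2) \<le> 4/3" by (simp add: field_simps power2_eq_square)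
    then show ?thesis using True by (simp add: bump_def)
  qed (simp add: bump_nonneg)
  then have "integral\<^sup>L lborel (\<lambda>s. exp (-4/3) * indicator {-1/2..1/2::real} s) \<le> integral\<^sup>L lborel bump"
    by (intro integral_mono integrable_bump) (auto intro!: integrable_real_indicator)
  moreover have "integral\<^sup>L lborel (\<lambda>s. exp (-4/3) * indicator {-1/2..1/2::real} s) = exp (-4/3::real)"
    by simp
  ultimately show ?thesis using exp_gt_zero[of "-4/3"] by linarith
qed

lemma moll_const_eq: "moll_const = 1 / integral\<^sup>L lborel bump"
proof -
  have ereal: "(-1::ereal) = ereal (-1)" "(1::ereal) = ereal 1"
    by (metis one_ereal_def uminus_ereal.simps(1))+
  then have "einterval (-1) 1 = {-1<..<1::real}" by (auto simp: einterval_def)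
  moreover have "(-1::ereal) \<le> 1" by (simp only: ereal ereal_less_eq) simp
  ultimately show ?thesis
    by (simp add: moll_const_def interval_lebesgue_integral_def set_lebesgue_integral_def
        bump_def[abs_def])
qed

lemma moll_const_pos: "moll_const > 0"
  using integral_bump_pos by (simp add: moll_const_eq)

lemma mollifier_nonneg: "\<rho> > 0 \<Longrightarrow> 0 \<le> mollifier \<rho> u"
  unfolding mollifier_def using moll_const_pos by auto

lemma mollifier_measurable [measurable]: "mollifier \<rho> \<in> borel_measurable borel"
  unfolding mollifier_def by measurable

lemma mollifier_le:
  assumes "\<rho> > 0" shows "mollifier \<rho> u \<le> moll_const / \<rho> * indicator {-\<rho>..\<rho>} u"
proof (cases "\<bar>u\<bar> < \<rho>")
  case True
  then have "u\<^sup>2 < \<rho>\<^sup>2" using abs_le_square_iff[of \<rho> u] assms by auto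
  then have "exp (- \<rho>\<^sup>2 / (\<rho>\<^sup>2 - u\<^sup>2)) \<le> 1" by (simp add: divide_nonpos_pos)
  then have "moll_const / \<rho> * exp (- \<rho>\<^sup>2 / (\<rho>\<^sup>2 - u\<^sup>2)) \<le> moll_const / \<rho>"
    by (rule mult_left_le) (use assms moll_const_pos in auto)
  moreover have "u \<in> {-\<rho>..\<rho>}" using True by auto
  ultimately show ?thesis using True by (simp add: mollifier_def)
qed (use assms moll_const_pos in \<open>simp add: mollifier_def\<close>)

lemma integrable_mollifier: "\<rho> > 0 \<Longrightarrow> integrable lborel (mollifier \<rho>)"
  by (rule Bochner_Integration.integrable_bound[of _ "\<lambda>u. moll_const / \<rho> * indicator {-\<rho>..\<rho>} u"])
     (use mollifier_le mollifier_nonneg moll_const_pos in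
       \<open>auto intro!: integrable_real_indicator AE_I2 simp: abs_mult\<close>)

lemma mollifier_scaled: "\<rho> > 0 \<Longrightarrow> mollifier \<rho> (\<rho> * s) = moll_const / \<rho> * bump s"
proof -
  assume "\<rho> > 0"
  have "\<rho>\<^sup>2 - (\<rho> * s)\<^sup>2 = \<rho>\<^sup>2 * (1 - s\<^sup>2)" by (simp add: algebra_simps power_mult_distrib)
  moreover have "\<bar>\<rho> * s\<bar> < \<rho> \<longleftrightarrow> s \<in> {-1<..<1}" using \<open>\<rho> > 0\<close> by (auto simp: abs_mult abs_less_iff)
  ultimately show ?thesis
    using \<open>\<rho> > 0\<close> by (auto simp: mollifier_def bump_def)
qed

lemma integral_mollifier: "\<rho> > 0 \<Longrightarrow> integral\<^sup>L lborel (mollifier \<rho>) = 1"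
proof -
  assume "\<rho> > 0"
  then have "integral\<^sup>L lborel (mollifier \<rho>) = \<rho> * (LBINT s. mollifier \<rho> (0 + \<rho> * s))"
    using lborel_integral_real_affine[of \<rho> "mollifier \<rho>" 0] by simp
  also have "\<dots> = 1"
    using \<open>\<rho> > 0\<close> integral_bump_pos by (simp add: mollifier_scaled moll_const_eq)
  finally show ?thesis .
qed

lemma integrable_mono_times_mollifier:
  assumes mono: "mono b" and "\<rho> > 0"
  shows "integrable lborel (\<lambda>u. b (x - u) * mollifier \<rho> u)"
proof (rule Bochner_Integration.integrable_bound)
  define B where "B = \<bar>b (x - \<rho>)\<bar> + \<bar>b (x + \<rho>)\<bar>"
  show "integrable lborel (\<lambda>u. B * mollifier \<rho> u)"
    using integrable_mollifier[OF \<open>\<rho> > 0\<close>] by simp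
  have "b \<in> borel_measurable borel" using borel_measurable_mono[OF mono] .
  then show "(\<lambda>u. b (x - u) * mollifier \<rho> u) \<in> borel_measurable lborel" by measurable
  have "\<bar>b (x - u) * mollifier \<rho> u\<bar> \<le> \<bar>B * mollifier \<rho> u\<bar>" for u
  proof (cases "\<bar>u\<bar> < \<rho>")
    case True
    then have "b (x - \<rho>) \<le> b (x - u)" "b (x - u) \<le> b (x + \<rho>)" by (auto intro: monoD[OF mono])
    then have "\<bar>b (x - u)\<bar> \<le> \<bar>B\<bar>" unfolding B_def by linarith
    then show ?thesis by (simp add: abs_mult mult_right_mono)
  qed (simp add: mollifier_def)
  then show "AE u in lborel. norm (b (x - u) * mollifier \<rho> u) \<le> norm (B * mollifier \<rho> u)"
    by simp
qed

lemma b_moll_growth: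
  assumes mono: "mono b" and "n > 0"
    and growth: "\<And>x y. y \<le> x \<Longrightarrow> c * (x - y) \<le> b x - b y" and "y \<le> x"
  shows "c * (x - y) \<le> b_moll b n x - b_moll b n y"
proof -
  define \<rho> where "\<rho> = 1 / real n"
  have "\<rho> > 0" using \<open>n > 0\<close> by (simp add: \<rho>_def)
  note int = integrable_mono_times_mollifier[OF mono \<open>\<rho> > 0\<close>]
  have "c * (x - y) = (LINT u|lborel. c * (x - y) * mollifier \<rho> u)"
    using integral_mollifier[OF \<open>\<rho> > 0\<close>] by simp
  also have "\<dots> \<le> (LINT u|lborel. b (x - u) * mollifier \<rho> u - b (y - u) * mollifier \<rho> u)"
  proof (rule integral_mono)
    fix u
    have "c * ((x - u) - (y - u)) \<le> b (x - u) - b (y - u)" using growth[of "y - u" "x - u"] \<open>y \<le> x\<close> by simp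
    then have "c * (x - y) * mollifier \<rho> u \<le> (b (x - u) - b (y - u)) * mollifier \<rho> u"
      using mollifier_nonneg[OF \<open>\<rho> > 0\<close>] by (simp add: mult_right_mono)
    then show "c * (x - y) * mollifier \<rho> u \<le> b (x - u) * mollifier \<rho> u - b (y - u) * mollifier \<rho> u"
      by (simp add: algebra_simps)
  qed (use int[of x] int[of y] integrable_mollifier[OF \<open>\<rho> > 0\<close>] in auto)
  also have "\<dots> = b_moll b n x - b_moll b n y"
    unfolding b_moll_def \<rho>_def[symmetric] using int[of x] int[of y] by (rule Bochner_Integration.integral_diff)
  finally show ?thesis .
qed

lemma admissible_b_moll_growth:
  assumes "admissible_b b" "n > 0" "y \<le> x"
  shows "b_bar b * (x - y) \<le> b_moll b n x - b_moll b n y"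
  using b_moll_growth[of b n "b_bar b"] admissible_b_growth[OF assms(1)] assms
  by (simp add: admissible_b_def)

lemma finite_grid_points_in:
  fixes S :: "(real^'d) set"
  assumes "bounded S" "h > 0"
  shows "finite {\<gamma>::int^'d. grid_pt h \<gamma> \<in> S}"
proof -
  obtain B where B: "\<And>x. x \<in> S \<Longrightarrow> norm x \<le> B" using assms(1) bounded_iff by blast
  define K where "K = \<lceil>B / h\<rceil>"
  have "{\<gamma>::int^'d. grid_pt h \<gamma> \<in> S} \<subseteq> vec_lambda ` (Pi\<^sub>E UNIV (\<lambda>_. {-K..K}))"
  proof
    fix \<gamma> :: "int^'d" assume "\<gamma> \<in> {\<gamma>. grid_pt h \<gamma> \<in> S}"
    then have "norm (grid_pt h \<gamma>) \<le> B" using B by auto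
    then have "h * \<bar>of_int (\<gamma> $ i)\<bar> \<le> B" for i
      using component_le_norm_cart[of "grid_pt h \<gamma>" i] assms(2)
      by (simp add: grid_pt_def abs_mult)
    then have "\<bar>of_int (\<gamma> $ i)\<bar> \<le> B / h" for i using assms(2) by (simp add: field_simps)
    then have "\<bar>\<gamma> $ i\<bar> \<le> K" for i
      by (metis K_def le_of_int_ceiling of_int_abs of_int_le_iff order_trans)
    then have "vec_nth \<gamma> \<in> Pi\<^sub>E UNIV (\<lambda>_. {-K..K})" by (auto simp: abs_le_iff minus_le_iff)
    moreover have "\<gamma> = vec_lambda (vec_nth \<gamma>)" by simp
    ultimately show "\<gamma> \<in> vec_lambda ` (Pi\<^sub>E UNIV (\<lambda>_. {-K..K}))" by blast
  qed
  then show ?thesis by (rule finite_subset) (auto intro!: finite_imageI finite_PiE)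
qed

lemma grid_pt_in_cell: "h > 0 \<Longrightarrow> grid_pt h \<gamma> \<in> cell h \<gamma>"
  unfolding cell_def grid_pt_def by (simp add: mem_box_cart)

lemma grid_pt_succ_in_cell: "h > 0 \<Longrightarrow> grid_pt h (\<gamma> + axis i 1) \<in> cell h \<gamma>"
  unfolding cell_def grid_pt_def by (auto simp: mem_box_cart axis_def)

lemma cell_idx_subset_nodes: "h > 0 \<Longrightarrow> \<gamma> \<in> cell_idx \<Omega> h \<Longrightarrow> \<gamma> \<in> nodes \<Omega> h"
  unfolding nodes_def grid_dom_def using grid_pt_in_cell by blast

lemma succ_of_cell_idx_in_nodes:
  "h > 0 \<Longrightarrow> \<gamma> \<in> cell_idx \<Omega> h \<Longrightarrow> \<gamma> + axis i 1 \<in> nodes \<Omega> h"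
  unfolding nodes_def grid_dom_def using grid_pt_succ_in_cell by blast

lemma finite_nodes: "bounded \<Omega> \<Longrightarrow> h > 0 \<Longrightarrow> finite (nodes \<Omega> h)"
  using finite_grid_points_in[OF bounded_closure] unfolding nodes_def grid_dom_def cell_idx_def
  by (rule finite_subset[rotated]) auto

lemma finite_cell_idx: "bounded \<Omega> \<Longrightarrow> h > 0 \<Longrightarrow> finite (cell_idx \<Omega> h)"
  using finite_nodes cell_idx_subset_nodes by (metis finite_subset subsetI)

lemma nodes_eq_int_nodes_Un_bd_nodes:
  assumes "bounded \<Omega>" "h > 0"
  shows "nodes \<Omega> h = int_nodes \<Omega> h \<union> bd_nodes \<Omega> h"
proof -
  have "closed (grid_dom \<Omega> h)"
    unfolding grid_dom_def cell_def using finite_cell_idx[OF assms] by (intro closed_UN) auto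
  then show ?thesis
    unfolding nodes_def int_nodes_def bd_nodes_def frontier_def using interior_subset by auto
qed

lemma int_nodes_disjoint_bd_nodes: "\<gamma> \<in> int_nodes \<Omega> h \<Longrightarrow> \<gamma> \<notin> bd_nodes \<Omega> h"
  unfolding int_nodes_def bd_nodes_def frontier_def by auto

lemma eq_if_in_same_unit_cell:
  fixes a b :: int and h t :: real
  assumes "h > 0" "h * a \<le> t" "t \<le> h * (a + 1)" "h * b < t" "t < h * (b + 1)"
  shows "a = b"
proof -
  have "h * a < h * (b + 1)" "h * b < h * (a + 1)" using assms by linarith+
  then have "real_of_int a < b + 1" "real_of_int b < a + 1"
    using \<open>h > 0\<close> mult_less_cancel_left_pos by blast+
  then show ?thesis by linarith
qed

lemma int_nodes_subset_cell_idx: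
  fixes \<Omega> :: "(real^'d) set"
  assumes "h > 0" "\<gamma> \<in> int_nodes \<Omega> h"
  shows "\<gamma> \<in> cell_idx \<Omega> h"
proof -
  obtain e where "e > 0" and e: "ball (grid_pt h \<gamma>) e \<subseteq> grid_dom \<Omega> h"
    using assms(2) unfolding int_nodes_def mem_interior by blast
  \<comment> \<open>a point just above \<open>grid_pt h \<gamma>\<close> in every coordinate lies in no cell but that of \<open>\<gamma>\<close>\<close>
  define \<epsilon> where "\<epsilon> = min (h/2) (e / (2 * real CARD('d)))"
  have \<epsilon>: "0 < \<epsilon>" "\<epsilon> < h" "\<epsilon> * real CARD('d) < e"
    using \<open>h > 0\<close> \<open>e > 0\<close> by (auto simp: \<epsilon>_def min_def field_simps)
  define q :: "real^'d" where "q = (\<chi> i. h * of_int (\<gamma> $ i) + \<epsilon>)"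
  have "norm (grid_pt h \<gamma> - q) \<le> (\<Sum>i\<in>UNIV. \<bar>(grid_pt h \<gamma> - q) $ i\<bar>)" by (rule norm_le_l1_cart)
  also have "\<dots> = \<epsilon> * real CARD('d)" using \<epsilon> by (simp add: q_def grid_pt_def)
  finally have "q \<in> grid_dom \<Omega> h" using \<epsilon> e by (auto simp: dist_norm)
  then obtain \<gamma>' where \<gamma>': "\<gamma>' \<in> cell_idx \<Omega> h" "q \<in> cell h \<gamma>'" unfolding grid_dom_def by blast
  have "\<gamma>' $ i = \<gamma> $ i" for i
    by (rule eq_if_in_same_unit_cell[of h _ "q $ i"])
       (use \<gamma>'(2) \<epsilon> \<open>h > 0\<close> in \<open>auto simp: cell_def grid_pt_def q_def mem_box_cart algebra_simps\<close>)
  then have "\<gamma>' = \<gamma>" by (simp add: vec_eq_iff)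
  then show ?thesis using \<gamma>' by simp
qed

lemma continuous_on_of_lipschitz_bound:
  fixes g :: "'a::real_normed_vector \<Rightarrow> real"
  assumes "\<forall>y z. \<bar>g y - g z\<bar> \<le> L * norm (y - z)"
  shows "continuous_on UNIV g"
proof (rule lipschitz_on_continuous_on)
  show "(max L 0)-lipschitz_on UNIV g"
  proof (rule lipschitz_onI)
    fix y z :: 'a
    have "\<bar>g y - g z\<bar> \<le> max L 0 * norm (y - z)"
      using assms mult_right_mono[OF max.cobounded1 norm_ge_zero, of L "y - z" 0]
      by (meson order_trans)
    then show "dist (g y) (g z) \<le> max L 0 * dist y z" by (simp add: dist_real_def dist_norm)
  qed simp
qed

lemma closed_subgraph:
  fixes g :: "'a::real_inner \<Rightarrow> real"
  assumes "continuous_on UNIV g"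
  shows "closed {y. y \<bullet> e \<le> g (y - (y \<bullet> e) *\<^sub>R e)}"
proof -
  have "continuous_on UNIV (\<lambda>y. g (y - (y \<bullet> e) *\<^sub>R e))"
    using assms by (rule continuous_on_compose2) (auto intro!: continuous_intros)
  then show ?thesis by (intro closed_Collect_le) (auto intro!: continuous_intros)
qed

lemma open_Int_closure_subset_closed:
  assumes "open U" "closed K" "U \<inter> S \<subseteq> K"
  shows "U \<inter> closure S \<subseteq> K"
  using open_Int_closure_subset[OF \<open>open U\<close>] closure_minimal[OF assms(3,2)] by blast

lemma interior_closure_subset_of_lipschitz_boundary:
  fixes \<Omega> :: "(real^'d) set"
  assumes "open \<Omega>" "lipschitz_boundary \<Omega>"
  shows "interior (closure \<Omega>) \<subseteq> \<Omega>"
proof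
  fix x assume x: "x \<in> interior (closure \<Omega>)"
  show "x \<in> \<Omega>"
  proof (rule ccontr)
    assume "x \<notin> \<Omega>"
    with x \<open>open \<Omega>\<close> have "x \<in> frontier \<Omega>"
      using interior_subset by (auto simp: frontier_def interior_open)
    then obtain r e g L where "r > 0" "norm (e::real^'d) = 1"
      and lip: "\<forall>y z. \<bar>g y - g z\<bar> \<le> L * norm (y - z)"
      and loc: "\<Omega> \<inter> ball x r = {y \<in> ball x r. y \<bullet> e < g (y - (y \<bullet> e) *\<^sub>R e)}"
      using assms(2) unfolding lipschitz_boundary_def by blast
    define K where "K = {y. y \<bullet> e \<le> g (y - (y \<bullet> e) *\<^sub>R e)}"
    have "ball x r \<inter> \<Omega> \<subseteq> K"
    proof
      fix z assume "z \<in> ball x r \<inter> \<Omega>"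
      then have "z \<bullet> e < g (z - (z \<bullet> e) *\<^sub>R e)" using loc by blast
      then show "z \<in> K" by (simp add: K_def)
    qed
    then have below_graph: "ball x r \<inter> closure \<Omega> \<subseteq> K"
      using closed_subgraph[OF continuous_on_of_lipschitz_bound[OF lip]]
      by (intro open_Int_closure_subset_closed) (auto simp: K_def)
    \<comment> \<open>yet \<open>closure \<Omega>\<close> contains the points just above \<open>x\<close>, which lie strictly above the graph\<close>
    obtain s where "s > 0" "ball x s \<subseteq> closure \<Omega>" using x mem_interior by blast
    define t where "t = min r s / 2"
    have "t > 0" "t < r" "t < s" using \<open>r > 0\<close> \<open>s > 0\<close> by (auto simp: t_def)
    define y where "y = x + t *\<^sub>R e"
    have "e \<bullet> e = 1" using \<open>norm e = 1\<close> by (simp add: norm_eq_1)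
    then have ye: "y \<bullet> e = x \<bullet> e + t" by (simp add: y_def inner_add_left)
    then have proj: "y - (y \<bullet> e) *\<^sub>R e = x - (x \<bullet> e) *\<^sub>R e"
      by (simp add: y_def algebra_simps scaleR_add_left)
    have "dist x y = t" using \<open>norm e = 1\<close> \<open>t > 0\<close> by (simp add: y_def dist_norm)
    then have "y \<in> ball x r \<inter> closure \<Omega>"
      using \<open>t < r\<close> \<open>t < s\<close> \<open>ball x s \<subseteq> closure \<Omega>\<close> by auto
    then have "y \<in> K" using below_graph by blast
    then have "x \<bullet> e + t \<le> g (x - (x \<bullet> e) *\<^sub>R e)" by (simp add: K_def) (metis ye proj)
    moreover have "x \<in> ball x r" using \<open>r > 0\<close> by simp
    then have "\<not> x \<bullet> e < g (x - (x \<bullet> e) *\<^sub>R e)" using loc \<open>x \<notin> \<Omega>\<close> by blast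
    ultimately show False using \<open>t > 0\<close> by linarith
  qed
qed

lemma measure_cell: "h > 0 \<Longrightarrow> measure lebesgue (cell h (\<gamma>::int^'d)) = h ^ CARD('d)"
proof -
  assume "h > 0"
  then have "cell h \<gamma> \<noteq> {}" using grid_pt_in_cell by blast
  then have "measure lborel (cell h \<gamma>) = h ^ CARD('d)"
    unfolding cell_def by (simp add: content_cbox_cart grid_pt_def algebra_simps)
  then show ?thesis unfolding cell_def by (simp add: measure_completion)
qed

lemma AE_cell_in_interior_closure:
  assumes "\<gamma> \<in> cell_idx \<Omega> h"
  shows "AE x in lebesgue. x \<in> cell h \<gamma> \<longrightarrow> x \<in> interior (closure \<Omega>)"
proof -
  have "negligible (cell h \<gamma> - interior (cell h \<gamma>))"
    unfolding cell_def interior_cbox by (rule negligible_frontier_interval)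
  then have "AE x in lebesgue. x \<notin> cell h \<gamma> - interior (cell h \<gamma>)"
    by (intro AE_not_in) (simp add: negligible_iff_null_sets)
  then show ?thesis
    using interior_mono[of "cell h \<gamma>" "closure \<Omega>"] assms
    by (auto simp: cell_idx_def elim!: eventually_mono)
qed

lemma abs_cell_avg_le:
  fixes \<Phi> :: "real^'d \<Rightarrow> real"
  assumes "h > 0" "0 \<le> L" and bound: "AE x in lebesgue. x \<in> cell h \<gamma> \<longrightarrow> \<bar>\<Phi> x\<bar> \<le> L"
  shows "\<bar>cell_avg h \<Phi> \<gamma>\<bar> \<le> L"
proof -
  have "\<bar>(LINT x:cell h \<gamma>|lebesgue. \<Phi> x)\<bar> \<le> L * h ^ CARD('d)"
  proof (cases "set_integrable lebesgue (cell h \<gamma>) \<Phi>")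
    case True
    have "integrable lebesgue (indicat_real (cell h \<gamma>))"
      unfolding cell_def using lmeasurable_cbox
      by (intro integrable_real_indicator) (auto simp: fmeasurable_def)
    have "\<bar>(LINT x:cell h \<gamma>|lebesgue. \<Phi> x)\<bar> \<le> (LINT x:cell h \<gamma>|lebesgue. \<bar>\<Phi> x\<bar>)"
      using set_integral_norm_bound[OF True] by simp
    also have "\<dots> \<le> (LINT x:cell h \<gamma>|lebesgue. L)"
      using True bound \<open>integrable lebesgue (indicat_real (cell h \<gamma>))\<close>
      by (intro set_integral_mono_AE set_integrable_norm[where f = \<Phi>, simplified])
         (auto simp: set_integrable_def)
    also have "\<dots> = L * h ^ CARD('d)"
      using measure_cell[OF \<open>h > 0\<close>, of \<gamma>] by (simp add: set_lebesgue_integral_def)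
    finally show ?thesis .
  next
    case False
    then show ?thesis
      using \<open>h > 0\<close> \<open>0 \<le> L\<close> by (simp add: set_lebesgue_integral_def set_integrable_def not_integrable_integral_eq)
  qed
  then show ?thesis
    using \<open>h > 0\<close> by (simp add: cell_avg_def abs_divide divide_le_eq)
qed

lemma abs_cell_avg_le_Linf_norm:
  fixes \<Omega> :: "(real^'d) set"
  assumes "open \<Omega>" "lipschitz_boundary \<Omega>" "h > 0" "\<gamma> \<in> cell_idx \<Omega> h"
    and "Linf_norm \<Omega> \<Phi> \<le> ereal L" "0 \<le> L"
  shows "\<bar>cell_avg h \<Phi> \<gamma>\<bar> \<le> L"
proof (rule abs_cell_avg_le[OF \<open>h > 0\<close> \<open>0 \<le> L\<close>])
  have "AE x in restrict_space lebesgue \<Omega>. ereal \<bar>\<Phi> x\<bar> \<le> Linf_norm \<Omega> \<Phi>"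
    unfolding Linf_norm_def by (rule esssup_AE)
  then have "AE x in restrict_space lebesgue \<Omega>. \<bar>\<Phi> x\<bar> \<le> L"
    by (rule eventually_mono) (use assms(5) in \<open>metis ereal_less_eq(3) order_trans\<close>)
  then have "AE x in lebesgue. x \<in> \<Omega> \<longrightarrow> \<bar>\<Phi> x\<bar> \<le> L"
    using \<open>open \<Omega>\<close> by (simp add: AE_restrict_space_iff)
  moreover have "AE x in lebesgue. x \<in> cell h \<gamma> \<longrightarrow> x \<in> \<Omega>"
    using AE_cell_in_interior_closure[OF assms(4)]
      interior_closure_subset_of_lipschitz_boundary[OF assms(1,2)]
    by (auto elim!: eventually_mono)
  ultimately show "AE x in lebesgue. x \<in> cell h \<gamma> \<longrightarrow> \<bar>\<Phi> x\<bar> \<le> L"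
    by eventually_elim auto
qed

lemma fdiff_minus: "fdiff h (\<lambda>\<mu>. - w \<mu>) \<gamma> i = - fdiff h w \<gamma> i"
  by (simp add: fdiff_def diff_divide_distrib)

lemma succ_neq: "(\<gamma>::int^'d) + axis i 1 \<noteq> \<gamma>"
  by (simp add: vec_eq_iff axis_def)

lemma sum_fdiff_indicator_nonneg_at_max:
  fixes w :: "int^'d \<Rightarrow> real"
  assumes "h > 0" and max: "\<forall>\<gamma>\<in>nodes \<Omega> h. w \<gamma> \<le> w \<gamma>0"
  shows "0 \<le> (\<Sum>\<gamma>\<in>cell_idx \<Omega> h. \<Sum>i\<in>UNIV. fdiff h w \<gamma> i * fdiff h (indicator {\<gamma>0}) \<gamma> i)"
proof (intro sum_nonneg)
  fix \<gamma> i assume "\<gamma> \<in> cell_idx \<Omega> h"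
  then have "w \<gamma> \<le> w \<gamma>0" "w (\<gamma> + axis i 1) \<le> w \<gamma>0"
    using max cell_idx_subset_nodes succ_of_cell_idx_in_nodes \<open>h > 0\<close> by blast+
  then have "0 \<le> (w (\<gamma> + axis i 1) - w \<gamma>) * (indicator {\<gamma>0} (\<gamma> + axis i 1) - indicator {\<gamma>0} \<gamma>)"
    using succ_neq[of \<gamma> i] by (auto simp: indicator_def)
  then show "0 \<le> fdiff h w \<gamma> i * fdiff h (indicator {\<gamma>0}) \<gamma> i"
    by (simp add: fdiff_def)
qed

lemma sum_fdiff_indicator_nonpos_at_min:
  fixes w :: "int^'d \<Rightarrow> real"
  assumes "h > 0" "\<forall>\<gamma>\<in>nodes \<Omega> h. w \<gamma>0 \<le> w \<gamma>"
  shows "(\<Sum>\<gamma>\<in>cell_idx \<Omega> h. \<Sum>i\<in>UNIV. fdiff h w \<gamma> i * fdiff h (indicator {\<gamma>0}) \<gamma> i) \<le> 0"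
  using sum_fdiff_indicator_nonneg_at_max[of h \<Omega> "\<lambda>\<mu>. - w \<mu>" \<gamma>0] assms
  by (simp add: fdiff_minus sum_negf)

lemma disc_state_tested_at_node:
  fixes \<Omega> :: "(real^'d) set"
  assumes ds: "disc_state \<Omega> T n h b \<Phi> f v" and "k \<in> {1..n}"
    and "\<gamma>0 \<in> int_nodes \<Omega> h" "h > 0" "bounded \<Omega>"
  shows "(b_moll b n (v \<gamma>0 k) - b_moll b n (v \<gamma>0 (k - 1))) / (T / real n) - f \<gamma>0 k
    = - (\<Sum>\<gamma>\<in>cell_idx \<Omega> h. \<Sum>i\<in>UNIV. fdiff h (\<lambda>\<mu>. v \<mu> k) \<gamma> i * fdiff h (indicator {\<gamma>0}) \<gamma> i)"
proof -
  define C where "C = cell_idx \<Omega> h"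
  define A where "A \<gamma> = (b_moll b n (v \<gamma> k) - b_moll b n (v \<gamma> (k - 1))) / (T / real n) - f \<gamma> k" for \<gamma>
  define S where "S \<gamma> = (\<Sum>i\<in>UNIV. fdiff h (\<lambda>\<mu>. v \<mu> k) \<gamma> i * fdiff h (indicator {\<gamma>0}) \<gamma> i)" for \<gamma>
  have "\<gamma>0 \<in> C" "finite C"
    using int_nodes_subset_cell_idx finite_cell_idx assms(3-5) by (auto simp: C_def)
  have "\<forall>\<gamma>\<in>bd_nodes \<Omega> h. indicator {\<gamma>0} \<gamma> = (0::real)"
    using int_nodes_disjoint_bd_nodes[OF assms(3)] by (auto split: split_indicator)
  then have "0 = (\<Sum>\<gamma>\<in>C. h ^ CARD('d) * (A \<gamma> * indicator {\<gamma>0} \<gamma> + S \<gamma>))"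
    using ds \<open>k \<in> {1..n}\<close> unfolding disc_state_def A_def S_def C_def
    by (force simp: algebra_simps)
  also have "\<dots> = h ^ CARD('d) * ((\<Sum>\<gamma>\<in>C. A \<gamma> * indicator {\<gamma>0} \<gamma>) + sum S C)"
    by (simp add: sum_distrib_left sum.distrib distrib_left)
  also have "(\<Sum>\<gamma>\<in>C. A \<gamma> * indicator {\<gamma>0} \<gamma>) = A \<gamma>0"
    using \<open>\<gamma>0 \<in> C\<close> \<open>finite C\<close> by (simp add: indicator_def sum.delta)
  finally have "A \<gamma>0 + sum S C = 0" using \<open>h > 0\<close> by simp
  then show ?thesis by (simp add: A_def S_def C_def eq_neg_iff_add_eq_0)
qed

lemma disc_state_increment_le_at_max:
  fixes \<Omega> :: "(real^'d) set"
  assumes "disc_state \<Omega> T n h b \<Phi> f v" "k \<in> {1..n}" "\<gamma>0 \<in> int_nodes \<Omega> h" "h > 0" "bounded \<Omega>"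
    and "T > 0" "n > 0" "\<forall>\<gamma>\<in>nodes \<Omega> h. v \<gamma> k \<le> v \<gamma>0 k"
  shows "b_moll b n (v \<gamma>0 k) - b_moll b n (v \<gamma>0 (k - 1)) \<le> T / real n * f \<gamma>0 k"
proof -
  have "T / real n > 0" using \<open>T > 0\<close> \<open>n > 0\<close> by simp
  have "(b_moll b n (v \<gamma>0 k) - b_moll b n (v \<gamma>0 (k - 1))) / (T / real n) \<le> f \<gamma>0 k"
    using disc_state_tested_at_node[OF assms(1-5)]
      sum_fdiff_indicator_nonneg_at_max[OF \<open>h > 0\<close> assms(8)] by linarith
  then show ?thesis by (simp only: pos_divide_le_eq[OF \<open>T / real n > 0\<close>] mult.commute)
qed

lemma disc_state_increment_ge_at_min:
  fixes \<Omega> :: "(real^'d) set"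
  assumes "disc_state \<Omega> T n h b \<Phi> f v" "k \<in> {1..n}" "\<gamma>0 \<in> int_nodes \<Omega> h" "h > 0" "bounded \<Omega>"
    and "T > 0" "n > 0" "\<forall>\<gamma>\<in>nodes \<Omega> h. v \<gamma>0 k \<le> v \<gamma> k"
  shows "T / real n * f \<gamma>0 k \<le> b_moll b n (v \<gamma>0 k) - b_moll b n (v \<gamma>0 (k - 1))"
proof -
  have "T / real n > 0" using \<open>T > 0\<close> \<open>n > 0\<close> by simp
  have "f \<gamma>0 k \<le> (b_moll b n (v \<gamma>0 k) - b_moll b n (v \<gamma>0 (k - 1))) / (T / real n)"
    using disc_state_tested_at_node[OF assms(1-5)]
      sum_fdiff_indicator_nonpos_at_min[OF \<open>h > 0\<close> assms(8)] by linarith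
  then show ?thesis by (simp only: pos_le_divide_eq[OF \<open>T / real n > 0\<close>] mult.commute)
qed

lemma diff_le_of_growth:
  fixes B :: "real \<Rightarrow> real"
  assumes "c > 0" "\<And>x y. y \<le> x \<Longrightarrow> c * (x - y) \<le> B x - B y"
    and "B a - B b \<le> e" "0 \<le> e"
  shows "a - b \<le> e / c"
proof (cases "b \<le> a")
  case True
  then have "c * (a - b) \<le> e" using assms(2)[OF True] assms(3) by linarith
  then show ?thesis using \<open>c > 0\<close> by (simp add: pos_le_divide_eq mult.commute)
next
  case False
  then show ?thesis using divide_nonneg_pos[OF \<open>0 \<le> e\<close> \<open>c > 0\<close>] by linarith
qed

lemma disc_state_le_at_max:
  fixes \<Omega> :: "(real^'d) set"
  assumes ds: "disc_state \<Omega> T n h b \<Phi> f v" and k: "k \<in> {1..n}"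
    and "h > 0" "bounded \<Omega>" "T > 0" "n > 0"
    and "c > 0" and growth: "\<And>x y. y \<le> x \<Longrightarrow> c * (x - y) \<le> b_moll b n x - b_moll b n y"
    and f: "\<forall>\<gamma>\<in>cell_idx \<Omega> h. f \<gamma> k \<le> D" and "0 \<le> D"
    and "\<mu> \<in> nodes \<Omega> h" and max: "\<forall>\<gamma>\<in>nodes \<Omega> h. v \<gamma> k \<le> v \<mu> k"
    and "v \<mu> (k - 1) \<le> M" "0 \<le> M"
  shows "v \<mu> k \<le> M + T / real n * D / c"
proof (cases "\<mu> \<in> int_nodes \<Omega> h")
  case True
  have "f \<mu> k \<le> D" using f int_nodes_subset_cell_idx[OF \<open>h > 0\<close> True] by blast
  then have "T / real n * f \<mu> k \<le> T / real n * D" using \<open>T > 0\<close> by (intro mult_left_mono) auto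
  then have step: "b_moll b n (v \<mu> k) - b_moll b n (v \<mu> (k - 1)) \<le> T / real n * D"
    using disc_state_increment_le_at_max[OF ds k True assms(3-6) max] by linarith
  have "0 \<le> T / real n * D" using \<open>T > 0\<close> \<open>0 \<le> D\<close> by simp
  then have "v \<mu> k - v \<mu> (k - 1) \<le> T / real n * D / c"
    using diff_le_of_growth[OF \<open>c > 0\<close> growth step] by blast
  then show ?thesis using \<open>v \<mu> (k - 1) \<le> M\<close> by linarith
next
  case False
  then have "v \<mu> k = 0"
    using ds k \<open>\<mu> \<in> nodes \<Omega> h\<close> nodes_eq_int_nodes_Un_bd_nodes[OF \<open>bounded \<Omega>\<close> \<open>h > 0\<close>]
    by (auto simp: disc_state_def)
  moreover have "0 \<le> T / real n * D / c" using \<open>0 \<le> D\<close> \<open>T > 0\<close> \<open>c > 0\<close> by simp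
  ultimately show ?thesis using \<open>0 \<le> M\<close> by linarith
qed

lemma disc_state_ge_at_min:
  fixes \<Omega> :: "(real^'d) set"
  assumes ds: "disc_state \<Omega> T n h b \<Phi> f v" and k: "k \<in> {1..n}"
    and "h > 0" "bounded \<Omega>" "T > 0" "n > 0"
    and "c > 0" and growth: "\<And>x y. y \<le> x \<Longrightarrow> c * (x - y) \<le> b_moll b n x - b_moll b n y"
    and f: "\<forall>\<gamma>\<in>cell_idx \<Omega> h. - D \<le> f \<gamma> k" and "0 \<le> D"
    and "\<mu> \<in> nodes \<Omega> h" and min: "\<forall>\<gamma>\<in>nodes \<Omega> h. v \<mu> k \<le> v \<gamma> k"
    and "- M \<le> v \<mu> (k - 1)" "0 \<le> M"
  shows "- (M + T / real n * D / c) \<le> v \<mu> k"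
proof (cases "\<mu> \<in> int_nodes \<Omega> h")
  case True
  have "- D \<le> f \<mu> k" using f int_nodes_subset_cell_idx[OF \<open>h > 0\<close> True] by blast
  then have "T / real n * (- D) \<le> T / real n * f \<mu> k" using \<open>T > 0\<close> by (intro mult_left_mono) auto
  then have step: "b_moll b n (v \<mu> (k - 1)) - b_moll b n (v \<mu> k) \<le> T / real n * D"
    using disc_state_increment_ge_at_min[OF ds k True assms(3-6) min] by linarith
  have "0 \<le> T / real n * D" using \<open>T > 0\<close> \<open>0 \<le> D\<close> by simp
  then have "v \<mu> (k - 1) - v \<mu> k \<le> T / real n * D / c"
    using diff_le_of_growth[OF \<open>c > 0\<close> growth step] by blast
  then show ?thesis using \<open>- M \<le> v \<mu> (k - 1)\<close> by linarith
next
  case False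
  then have "v \<mu> k = 0"
    using ds k \<open>\<mu> \<in> nodes \<Omega> h\<close> nodes_eq_int_nodes_Un_bd_nodes[OF \<open>bounded \<Omega>\<close> \<open>h > 0\<close>]
    by (auto simp: disc_state_def)
  moreover have "0 \<le> T / real n * D / c" using \<open>0 \<le> D\<close> \<open>T > 0\<close> \<open>c > 0\<close> by simp
  ultimately show ?thesis using \<open>0 \<le> M\<close> by linarith
qed

lemma disc_state_abs_le_step:
  fixes \<Omega> :: "(real^'d) set"
  assumes ds: "disc_state \<Omega> T n h b \<Phi> f v" and k: "k \<in> {1..n}"
    and "h > 0" "bounded \<Omega>" "T > 0" "n > 0"
    and "c > 0" and growth: "\<And>x y. y \<le> x \<Longrightarrow> c * (x - y) \<le> b_moll b n x - b_moll b n y"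
    and f: "\<forall>\<gamma>\<in>cell_idx \<Omega> h. \<bar>f \<gamma> k\<bar> \<le> D" and "0 \<le> D"
    and prev: "\<forall>\<gamma>\<in>nodes \<Omega> h. \<bar>v \<gamma> (k - 1)\<bar> \<le> M" and "0 \<le> M"
    and "\<gamma> \<in> nodes \<Omega> h"
  shows "\<bar>v \<gamma> k\<bar> \<le> M + T / real n * D / c"
proof -
  define N where "N = nodes \<Omega> h"
  have "finite N" "N \<noteq> {}" using finite_nodes \<open>bounded \<Omega>\<close> \<open>h > 0\<close> \<open>\<gamma> \<in> nodes \<Omega> h\<close> by (auto simp: N_def)
  obtain \<gamma>1 where "\<gamma>1 \<in> N" and max: "\<forall>\<mu>\<in>N. v \<mu> k \<le> v \<gamma>1 k"
    using ex_is_arg_min_if_finite[OF \<open>finite N\<close> \<open>N \<noteq> {}\<close>, of "\<lambda>\<mu>. - v \<mu> k"]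
    by (auto simp: is_arg_min_linorder)
  obtain \<gamma>2 where "\<gamma>2 \<in> N" and min: "\<forall>\<mu>\<in>N. v \<gamma>2 k \<le> v \<mu> k"
    using ex_is_arg_min_if_finite[OF \<open>finite N\<close> \<open>N \<noteq> {}\<close>, of "\<lambda>\<mu>. v \<mu> k"]
    by (auto simp: is_arg_min_linorder)
  have "\<forall>\<gamma>\<in>cell_idx \<Omega> h. f \<gamma> k \<le> D" "\<forall>\<gamma>\<in>cell_idx \<Omega> h. - D \<le> f \<gamma> k"
    using f by (auto simp: abs_le_iff)
  moreover have "v \<gamma>1 (k - 1) \<le> M" "- M \<le> v \<gamma>2 (k - 1)"
    using prev \<open>\<gamma>1 \<in> N\<close> \<open>\<gamma>2 \<in> N\<close> by (auto simp: N_def abs_le_iff)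
  ultimately have "v \<gamma>1 k \<le> M + T / real n * D / c" "- (M + T / real n * D / c) \<le> v \<gamma>2 k"
    using disc_state_le_at_max[OF ds k assms(3-7) growth _ \<open>0 \<le> D\<close>, of \<gamma>1 M]
      disc_state_ge_at_min[OF ds k assms(3-7) growth _ \<open>0 \<le> D\<close>, of \<gamma>2 M]
      \<open>\<gamma>1 \<in> N\<close> \<open>\<gamma>2 \<in> N\<close> max min \<open>0 \<le> M\<close> by (simp_all add: N_def)
  moreover have "v \<gamma> k \<le> v \<gamma>1 k" "v \<gamma>2 k \<le> v \<gamma> k"
    using max min \<open>\<gamma> \<in> nodes \<Omega> h\<close> by (simp_all add: N_def)
  ultimately show ?thesis by linarith
qed

lemma disc_state_abs_le:
  fixes \<Omega> :: "(real^'d) set"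
  assumes ds: "disc_state \<Omega> T n h b \<Phi> f v"
    and "h > 0" "bounded \<Omega>" "T > 0" "n > 0"
    and "c > 0" and growth: "\<And>x y. y \<le> x \<Longrightarrow> c * (x - y) \<le> b_moll b n x - b_moll b n y"
    and f: "\<forall>\<gamma>\<in>cell_idx \<Omega> h. \<forall>k\<in>{1..n}. \<bar>f \<gamma> k\<bar> \<le> D" and "0 \<le> D"
    and init: "\<forall>\<gamma>\<in>nodes \<Omega> h. \<bar>v \<gamma> 0\<bar> \<le> M" and "0 \<le> M"
  shows "\<forall>k\<le>n. \<forall>\<gamma>\<in>nodes \<Omega> h. \<bar>v \<gamma> k\<bar> \<le> M + T * D / c"
proof (intro allI impI ballI)
  fix k \<gamma> assume "k \<le> n" "\<gamma> \<in> nodes \<Omega> h"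
  define e where "e = T / real n * D / c"
  have "0 \<le> e" using \<open>T > 0\<close> \<open>0 \<le> D\<close> \<open>c > 0\<close> by (simp add: e_def)
  have "\<forall>\<gamma>\<in>nodes \<Omega> h. \<bar>v \<gamma> k\<bar> \<le> M + real k * e" using \<open>k \<le> n\<close>
  proof (induction k)
    case (Suc k)
    have "0 \<le> M + real k * e" using \<open>0 \<le> M\<close> \<open>0 \<le> e\<close> by simp
    have "\<bar>v \<mu> (Suc k)\<bar> \<le> M + real k * e + e" if "\<mu> \<in> nodes \<Omega> h" for \<mu>
      using disc_state_abs_le_step[OF ds _ assms(2-6) growth _ \<open>0 \<le> D\<close> _ \<open>0 \<le> M + real k * e\<close> that]
        f Suc by (simp add: e_def)
    then show ?case by (simp add: algebra_simps)
  qed (use init in simp)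
  moreover have "real k * e \<le> T * D / c"
  proof -
    have "real k * e \<le> real n * e" using \<open>k \<le> n\<close> \<open>0 \<le> e\<close> by (simp add: mult_right_mono)
    also have "\<dots> = T * D / c" using \<open>n > 0\<close> by (simp add: e_def)
    finally show ?thesis .
  qed
  ultimately show "\<bar>v \<gamma> k\<bar> \<le> M + T * D / c" using \<open>\<gamma> \<in> nodes \<Omega> h\<close> by fastforce
qed

lemma disc_state_initial_abs_le:
  fixes \<Omega> :: "(real^'d) set"
  assumes ds: "disc_state \<Omega> T n h b \<Phi> f v"
    and "open \<Omega>" "lipschitz_boundary \<Omega>" "bounded \<Omega>" "h > 0"
    and "Linf_norm \<Omega> \<Phi> \<le> ereal L" "0 \<le> L"
  shows "\<forall>\<gamma>\<in>nodes \<Omega> h. \<bar>v \<gamma> 0\<bar> \<le> L"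
proof
  fix \<gamma> assume "\<gamma> \<in> nodes \<Omega> h"
  then consider "\<gamma> \<in> int_nodes \<Omega> h" | "\<gamma> \<in> bd_nodes \<Omega> h"
    using nodes_eq_int_nodes_Un_bd_nodes[OF \<open>bounded \<Omega>\<close> \<open>h > 0\<close>] by blast
  then show "\<bar>v \<gamma> 0\<bar> \<le> L"
  proof cases
    case 1
    then have "v \<gamma> 0 = cell_avg h \<Phi> \<gamma>" using ds by (simp add: disc_state_def)
    then show ?thesis
      using abs_cell_avg_le_Linf_norm[OF assms(2,3,5) int_nodes_subset_cell_idx[OF \<open>h > 0\<close> 1] assms(6,7)]
      by simp
  next
    case 2
    then show ?thesis using ds \<open>0 \<le> L\<close> by (simp add: disc_state_def)
  qed
qed

lemma abs_le_disc_linf: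
  assumes "bounded \<Omega>" "h > 0" "\<gamma> \<in> cell_idx \<Omega> h" "k \<in> {1..n}"
  shows "\<bar>f \<gamma> k\<bar> \<le> disc_linf \<Omega> h n f"
  unfolding disc_linf_def
  using assms finite_cell_idx[OF assms(1,2)] by (intro Max_ge finite_image_set2) auto

lemma disc_linf_nonneg:
  assumes "bounded \<Omega>" "h > 0" "cell_idx \<Omega> h \<noteq> {}" "n > 0"
  shows "0 \<le> disc_linf \<Omega> h n f"
proof -
  obtain \<gamma> where "\<gamma> \<in> cell_idx \<Omega> h" using assms(3) by blast
  then have "\<bar>f \<gamma> 1\<bar> \<le> disc_linf \<Omega> h n f"
    using abs_le_disc_linf[OF assms(1,2)] \<open>n > 0\<close> by simp
  then show ?thesis by (meson abs_ge_zero order_trans)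
qed

lemma ereal_max_finite:
  assumes "X < \<infinity>"
  obtains g where "max (ereal a) X = ereal g" "a \<le> g" "X \<le> ereal g"
proof -
  have "\<bar>max (ereal a) X\<bar> \<noteq> \<infinity>" using assms by (cases X) (auto simp: max_def)
  then obtain g where g: "max (ereal a) X = ereal g" by (metis ereal_real')
  then have "a \<le> g" "X \<le> ereal g" by (metis ereal_less_eq(3) max.cobounded1 max.cobounded2)+
  with g show thesis by (rule that)
qed

lemma add_mult_le_exp_mult:
  fixes a g T :: real
  assumes "a \<le> g" "0 \<le> g" "0 \<le> T"
  shows "g + T * a \<le> exp T * g"
proof -
  have "g + T * a \<le> g + T * g" using assms mult_left_mono[of a g T] by simp
  also have "\<dots> \<le> exp T * g"
    using mult_right_mono[OF exp_ge_add_one_self \<open>0 \<le> g\<close>, of T] by (simp add: algebra_simps)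
  finally show ?thesis .
qed

theorem theorem3p1:
  fixes \<Omega> :: "(real^'d) set" and T h R :: real and n :: nat
    and b :: "real \<Rightarrow> real" and \<Phi> :: "real^'d \<Rightarrow> real"
    and f v :: "int^'d \<Rightarrow> nat \<Rightarrow> real"
  assumes "open \<Omega>" and "bounded \<Omega>" and "lipschitz_boundary \<Omega>"
    and "T > 0"
    and "admissible_b b" and "b_bar b > 0"
    and "\<Phi> \<in> W12 (nbhd1 \<Omega>)" and "Linf_norm \<Omega> \<Phi> < \<infinity>"
    and "n > 0" and "h > 0"
    and "R > 0" and "\<forall>\<gamma>\<in>cell_idx \<Omega> h. \<forall>k\<in>{1..n}. \<bar>f \<gamma> k\<bar> \<le> R"
    and "disc_state \<Omega> T n h b \<Phi> f v"
  shows "\<forall>k\<le>n. \<forall>\<gamma>\<in>nodes \<Omega> h.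
           ereal \<bar>v \<gamma> k\<bar> \<le> ereal (exp T) *
             max (ereal (disc_linf \<Omega> h n f / b_bar b)) (Linf_norm \<Omega> \<Phi>)"
  \<comment> \<open>the bound uses \<open>disc_linf\<close> directly\<close>
proof (cases "cell_idx \<Omega> h = {}")
  case True
  then show ?thesis by (simp add: nodes_def grid_dom_def)
next
  case False
  define D where "D = disc_linf \<Omega> h n f"
  have "0 \<le> D" using disc_linf_nonneg[OF assms(2,10) False \<open>n > 0\<close>] by (simp add: D_def)
  obtain g where g: "max (ereal (D / b_bar b)) (Linf_norm \<Omega> \<Phi>) = ereal g"
    and "D / b_bar b \<le> g" "Linf_norm \<Omega> \<Phi> \<le> ereal g"
    using ereal_max_finite[OF \<open>Linf_norm \<Omega> \<Phi> < \<infinity>\<close>] by blast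
  have "0 \<le> g" using \<open>0 \<le> D\<close> \<open>b_bar b > 0\<close> \<open>D / b_bar b \<le> g\<close> by (meson divide_nonneg_pos order_trans)
  have "\<forall>k\<le>n. \<forall>\<gamma>\<in>nodes \<Omega> h. \<bar>v \<gamma> k\<bar> \<le> g + T * D / b_bar b"
    using disc_state_abs_le[OF assms(13,10,2,4,9,6) admissible_b_moll_growth[OF assms(5,9)]
        _ \<open>0 \<le> D\<close> disc_state_initial_abs_le[OF assms(13,1,3,2,10)] \<open>0 \<le> g\<close>]
      abs_le_disc_linf[OF assms(2,10)] \<open>Linf_norm \<Omega> \<Phi> \<le> ereal g\<close> \<open>0 \<le> g\<close>
    by (simp add: D_def)
  moreover have "g + T * D / b_bar b \<le> exp T * g"
    using add_mult_le_exp_mult[OF \<open>D / b_bar b \<le> g\<close> \<open>0 \<le> g\<close>] \<open>T > 0\<close> by simp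
  ultimately have "\<forall>k\<le>n. \<forall>\<gamma>\<in>nodes \<Omega> h. \<bar>v \<gamma> k\<bar> \<le> exp T * g" by (auto intro: order_trans)
  then show ?thesis unfolding D_def[symmetric] g by simp
qed

end
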